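(* Let $T$ be a finite tree, and let $\Delta$ and $\Sigma$ be orbits of the action of $\mathrm{Aut}(T)$ on the vertex set of $T$. For an orbit $\Theta$, let $T_\Theta$ be the subgraph of $T$ consisting of all vertices and edges of $T$ that lie on the path from $\alpha$ to $\beta$ for some $\alpha,\beta\in\Theta$. If some vertex $\gamma\in\Sigma$ is a vertex of $T_\Delta$, then $T_\Sigma$ is a subtree of $T_\Delta$.
   Context: $\mathrm{Aut}(T)$ is the automorphism group of $T$. *)

theory Defs
  imports Main
begin

definition graph :: "'a set \<Rightarrow> ('a \<Rightarrow> 'a \<Rightarrow> bool) \<Rightarrow> bool" where
  "graph V E \<longleftrightarrow> (\<forall>x y. E x y \<longrightarrow> x \<in> V \<and> y \<in> V \<and> E y x \<and> x \<noteq> y)"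

definition is_path :: "('a \<Rightarrow> 'a \<Rightarrow> bool) \<Rightarrow> 'a \<Rightarrow> 'a \<Rightarrow> 'a list \<Rightarrow> bool" where
  "is_path E a b xs \<longleftrightarrow> xs \<noteq> [] \<and> hd xs = a \<and> last xs = b \<and> distinct xs \<and>
     (\<forall>i. Suc i < length xs \<longrightarrow> E (xs ! i) (xs ! Suc i))"

definition connected_graph :: "'a set \<Rightarrow> ('a \<Rightarrow> 'a \<Rightarrow> bool) \<Rightarrow> bool" where
  "connected_graph V E \<longleftrightarrow> V \<noteq> {} \<and> (\<forall>a\<in>V. \<forall>b\<in>V. \<exists>xs. is_path E a b xs)"

definition is_cycle :: "('a \<Rightarrow> 'a \<Rightarrow> bool) \<Rightarrow> 'a list \<Rightarrow> bool" where
  "is_cycle E xs \<longleftrightarrow> length xs \<ge> 3 \<and> distinct xs \<and>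
     (\<forall>i. Suc i < length xs \<longrightarrow> E (xs ! i) (xs ! Suc i)) \<and> E (last xs) (hd xs)"

definition finite_tree :: "'a set \<Rightarrow> ('a \<Rightarrow> 'a \<Rightarrow> bool) \<Rightarrow> bool" where
  "finite_tree V E \<longleftrightarrow> finite V \<and> graph V E \<and> connected_graph V E \<and> \<not> (\<exists>xs. is_cycle E xs)"

definition is_aut :: "'a set \<Rightarrow> ('a \<Rightarrow> 'a \<Rightarrow> bool) \<Rightarrow> ('a \<Rightarrow> 'a) \<Rightarrow> bool" where
  "is_aut V E f \<longleftrightarrow> bij_betw f V V \<and> (\<forall>x\<in>V. \<forall>y\<in>V. E x y \<longleftrightarrow> E (f x) (f y))"

definition aut_orbit :: "'a set \<Rightarrow> ('a \<Rightarrow> 'a \<Rightarrow> bool) \<Rightarrow> 'a \<Rightarrow> 'a set" where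
  "aut_orbit V E x = {f x | f. is_aut V E f}"

definition is_aut_orbit :: "'a set \<Rightarrow> ('a \<Rightarrow> 'a \<Rightarrow> bool) \<Rightarrow> 'a set \<Rightarrow> bool" where
  "is_aut_orbit V E Th \<longleftrightarrow> (\<exists>x\<in>V. Th = aut_orbit V E x)"

definition span_verts :: "('a \<Rightarrow> 'a \<Rightarrow> bool) \<Rightarrow> 'a set \<Rightarrow> 'a set" where
  "span_verts E Th = {v. \<exists>a\<in>Th. \<exists>b\<in>Th. \<exists>xs. is_path E a b xs \<and> v \<in> set xs}"

definition span_edges :: "('a \<Rightarrow> 'a \<Rightarrow> bool) \<Rightarrow> 'a set \<Rightarrow> 'a \<Rightarrow> 'a \<Rightarrow> bool" where
  "span_edges E Th u v \<longleftrightarrow> (\<exists>a\<in>Th. \<exists>b\<in>Th. \<exists>xs i. is_path E a b xs \<and> Suc i < length xs \<and>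
      ((u = xs ! i \<and> v = xs ! Suc i) \<or> (v = xs ! i \<and> u = xs ! Suc i)))"

end

theory Submission
  imports Defs
begin

text \<open>
  Automorphisms map the span of an orbit onto itself, so an orbit \<Sigma> that meets T_\<Delta> lies
  inside T_\<Delta>. In a tree, T_\<Delta> is convex: any two of its vertices are joined by a walk
  along its own edges, and an edge of the path between them that this walk avoided could be
  deleted without disconnecting its endpoints, which would close a cycle. Hence the paths
  between vertices of \<Sigma> run inside T_\<Delta>, and T_\<Sigma>, being connected through its own
  edges and a subgraph of an acyclic graph, is again a tree.
\<close>

subsection \<open>Paths in acyclic graphs\<close>

lemma rtranclp_chain:
  assumes "m \<le> n" and "\<And>j. m \<le> j \<Longrightarrow> j < n \<Longrightarrow> R (f j) (f (Suc j))"
  shows "R\<^sup>*\<^sup>* (f m) (f n)"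
  using assms
proof (induction n rule: dec_induct)
  case (step n)
  then show ?case by (meson le_SucI less_Suc_eq rtranclp.rtrancl_into_rtrancl)
qed simp

lemma rtranclp_imp_distinct_walk:
  assumes "R\<^sup>*\<^sup>* a b"
  obtains xs where "xs \<noteq> []" "hd xs = a" "last xs = b" "distinct xs" "successively R xs"
  using assms
proof (induction arbitrary: thesis rule: converse_rtranclp_induct)
  case base
  show ?case by (rule base[of "[b]"]) auto
next
  case (step a c)
  obtain ys where ys: "ys \<noteq> []" "hd ys = c" "last ys = b" "distinct ys" "successively R ys"
    using step.IH by blast
  show ?case
  proof (cases "a \<in> set ys")
    case True
    then obtain as bs where "ys = as @ a # bs" by (meson split_list)
    with ys show ?thesis by (intro step.prems[of "a # bs"]) (auto simp: successively_append_iff)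
  next
    case False
    with ys step.hyps(1) show ?thesis
      by (intro step.prems[of "a # ys"]) (auto simp: successively_Cons)
  qed
qed

lemma is_path_iff_successively:
  "is_path E a b xs \<longleftrightarrow> xs \<noteq> [] \<and> hd xs = a \<and> last xs = b \<and> distinct xs \<and> successively E xs"
  unfolding is_path_def successively_conv_nth by blast

definition delete_edge :: "('a \<Rightarrow> 'a \<Rightarrow> bool) \<Rightarrow> 'a \<Rightarrow> 'a \<Rightarrow> 'a \<Rightarrow> 'a \<Rightarrow> bool" where
  "delete_edge E x y a b \<longleftrightarrow> E a b \<and> {a, b} \<noteq> {x, y}"

lemma symp_delete_edge:
  assumes "graph V E" shows "symp (delete_edge E x y)"
  using assms unfolding graph_def delete_edge_def by (auto intro: sympI simp: insert_commute)

lemma acyclic_edge_not_bypassed: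
  assumes "graph V E" and "\<not> (\<exists>c. is_cycle E c)" and "E x y"
  shows "\<not> (delete_edge E x y)\<^sup>*\<^sup>* x y"
proof
  assume "(delete_edge E x y)\<^sup>*\<^sup>* x y"
  then obtain zs where zs: "zs \<noteq> []" "hd zs = x" "last zs = y" "distinct zs"
      "successively (delete_edge E x y) zs"
    by (rule rtranclp_imp_distinct_walk)
  have "x \<noteq> y" and "E y x" using assms(1,3) unfolding graph_def by blast+
  have "length zs \<ge> 3"
  proof (rule ccontr)
    assume "\<not> length zs \<ge> 3"
    with zs \<open>x \<noteq> y\<close> obtain z1 z2 where "zs = [z1, z2]"
      by (cases zs; cases "tl zs"; cases "tl (tl zs)") auto
    with zs show False by (simp add: delete_edge_def)
  qed
  moreover have "successively E zs"
    using zs(5) by (rule successively_mono) (simp add: delete_edge_def)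
  ultimately have "is_cycle E zs"
    using zs \<open>E y x\<close> unfolding is_cycle_def successively_conv_nth by simp
  with assms(2) show False by blast
qed

text \<open>If R avoided the edge, its endpoints would stay connected after deleting it, closing a cycle.\<close>
lemma acyclic_path_edge_in_connecting_relation:
  assumes g: "graph V E" and acyc: "\<not> (\<exists>c. is_cycle E c)"
    and sub: "\<And>a b. R a b \<Longrightarrow> E a b" and conn: "R\<^sup>*\<^sup>* u v"
    and p: "is_path E u v xs" and i: "Suc i < length xs"
  shows "R (xs ! i) (xs ! Suc i) \<or> R (xs ! Suc i) (xs ! i)"
proof (rule ccontr)
  define x y where "x = xs ! i" and "y = xs ! Suc i"
  let ?D = "delete_edge E x y"
  assume "\<not> (R (xs ! i) (xs ! Suc i) \<or> R (xs ! Suc i) (xs ! i))"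
  then have "\<not> R x y" "\<not> R y x" unfolding x_def y_def by blast+
  then have "R a b \<Longrightarrow> ?D a b" for a b
    using sub by (auto simp: delete_edge_def doubleton_eq_iff)
  then have "?D\<^sup>*\<^sup>* u v" using conn by (metis rtranclp_mono predicate2I predicate2D)
  have steps: "?D (xs ! j) (xs ! Suc j)" if "Suc j < length xs" "j \<noteq> i" for j
  proof -
    have "{xs ! j, xs ! Suc j} \<noteq> {x, y}"
      using p that i unfolding x_def y_def is_path_def
      by (auto simp: doubleton_eq_iff nth_eq_iff_index_eq)
    with p that show ?thesis unfolding is_path_def delete_edge_def by blast
  qed
  have D_sym: "?D\<^sup>*\<^sup>* b a" if "?D\<^sup>*\<^sup>* a b" for a b
    using symp_rtranclp[OF symp_delete_edge[OF g]] that by (rule sympD)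
  have ends: "xs ! 0 = u" "xs ! (length xs - 1) = v"
    using p unfolding is_path_def by (auto simp: hd_conv_nth last_conv_nth)
  have "?D\<^sup>*\<^sup>* (xs ! 0) (xs ! i)"
    by (rule rtranclp_chain) (use steps i in auto)
  then have x_u: "?D\<^sup>*\<^sup>* x u" using D_sym ends by (simp add: x_def)
  have "?D\<^sup>*\<^sup>* (xs ! Suc i) (xs ! (length xs - 1))"
    by (rule rtranclp_chain) (use steps i in auto)
  then have v_y: "?D\<^sup>*\<^sup>* v y" using D_sym ends by (simp add: y_def)
  have "?D\<^sup>*\<^sup>* x y" using x_u \<open>?D\<^sup>*\<^sup>* u v\<close> v_y by (meson rtranclp_trans)
  moreover have "E x y" using p i unfolding x_def y_def is_path_def by blast
  ultimately show False using acyclic_edge_not_bypassed[OF g acyc] by blast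
qed

lemma path_vertices_in_graph:
  assumes "graph V E" and "is_path E a b xs" and "a \<in> V"
  shows "set xs \<subseteq> V"
proof
  fix z assume "z \<in> set xs"
  then obtain k where k: "k < length xs" "z = xs ! k" by (metis in_set_conv_nth)
  show "z \<in> V"
  proof (cases k)
    case 0
    with assms(2,3) k show ?thesis unfolding is_path_def by (metis hd_conv_nth)
  next
    case (Suc j)
    with assms(2) k have "E (xs ! j) z" unfolding is_path_def by simp
    with assms(1) show ?thesis unfolding graph_def by blast
  qed
qed

lemma is_cycle_mono: "is_cycle R c \<Longrightarrow> (\<And>a b. R a b \<Longrightarrow> S a b) \<Longrightarrow> is_cycle S c"
  unfolding is_cycle_def by blast

subsection \<open>The subgraph spanned by a vertex set\<close>

lemma span_verts_intro:
  "a \<in> Th \<Longrightarrow> b \<in> Th \<Longrightarrow> is_path E a b xs \<Longrightarrow> z \<in> set xs \<Longrightarrow> z \<in> span_verts E Th"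
  unfolding span_verts_def by blast

lemma subset_span_verts: "Th \<subseteq> span_verts E Th"
proof
  fix a assume "a \<in> Th"
  moreover have "is_path E a a [a]" unfolding is_path_def by simp
  ultimately show "a \<in> span_verts E Th" by (auto intro: span_verts_intro)
qed

lemma span_verts_subset:
  assumes "graph V E" and "Th \<subseteq> V" shows "span_verts E Th \<subseteq> V"
  using assms path_vertices_in_graph unfolding span_verts_def by fastforce

lemma path_edge_in_span_edges:
  "a \<in> Th \<Longrightarrow> b \<in> Th \<Longrightarrow> is_path E a b xs \<Longrightarrow> Suc i < length xs
    \<Longrightarrow> span_edges E Th (xs ! i) (xs ! Suc i)"
  unfolding span_edges_def by blast

lemma symp_span_edges: "symp (span_edges E Th)"
  unfolding span_edges_def by (rule sympI) blast

lemma span_edges_imp_edge: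
  assumes "graph V E" and "span_edges E Th s t" shows "E s t"
proof -
  obtain a b xs i where "is_path E a b xs" "Suc i < length xs"
      "(s = xs ! i \<and> t = xs ! Suc i) \<or> (t = xs ! i \<and> s = xs ! Suc i)"
    using assms(2) unfolding span_edges_def by blast
  moreover from this have "E (xs ! i) (xs ! Suc i)" unfolding is_path_def by blast
  ultimately show ?thesis using assms(1) unfolding graph_def by blast
qed

lemma span_edges_irreflexive: "graph V E \<Longrightarrow> \<not> span_edges E Th s s"
  using span_edges_imp_edge[of V E Th s s] unfolding graph_def by blast

lemma span_edges_in_span_verts:
  assumes "span_edges E Th s t" shows "s \<in> span_verts E Th"
proof -
  obtain a b xs i where path: "a \<in> Th" "b \<in> Th" "is_path E a b xs" and "Suc i < length xs"
      and "s = xs ! i \<or> s = xs ! Suc i"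
    using assms unfolding span_edges_def by blast
  then have "s \<in> set xs" by auto
  with path show ?thesis by (rule span_verts_intro)
qed

lemma span_verts_reachable:
  assumes "z \<in> span_verts E Th"
  obtains a where "a \<in> Th" "(span_edges E Th)\<^sup>*\<^sup>* a z"
proof -
  obtain a b xs where path: "a \<in> Th" "b \<in> Th" "is_path E a b xs" "z \<in> set xs"
    using assms unfolding span_verts_def by blast
  then obtain k where k: "k < length xs" "z = xs ! k" by (metis in_set_conv_nth)
  have "(span_edges E Th)\<^sup>*\<^sup>* (xs ! 0) (xs ! k)"
    by (rule rtranclp_chain) (use path k in \<open>auto intro: path_edge_in_span_edges\<close>)
  moreover have "xs ! 0 = a" using path(3) unfolding is_path_def by (metis hd_conv_nth)
  ultimately show ?thesis using that path(1) k(2) by blast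
qed

lemma span_verts_connected:
  assumes conn: "connected_graph V E" and "Th \<subseteq> V"
    and "u \<in> span_verts E Th" and "v \<in> span_verts E Th"
  shows "(span_edges E Th)\<^sup>*\<^sup>* u v"
proof -
  let ?S = "span_edges E Th"
  obtain a where a: "a \<in> Th" "?S\<^sup>*\<^sup>* a u" using assms(3) by (rule span_verts_reachable)
  obtain b where b: "b \<in> Th" "?S\<^sup>*\<^sup>* b v" using assms(4) by (rule span_verts_reachable)
  obtain xs where xs: "is_path E a b xs" using conn a(1) b(1) \<open>Th \<subseteq> V\<close>
    unfolding connected_graph_def by blast
  have "?S\<^sup>*\<^sup>* (xs ! 0) (xs ! (length xs - 1))"
    by (rule rtranclp_chain) (use a b xs in \<open>auto intro: path_edge_in_span_edges\<close>)
  moreover have "xs ! 0 = a" "xs ! (length xs - 1) = b"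
    using xs unfolding is_path_def by (auto simp: hd_conv_nth last_conv_nth)
  ultimately have "?S\<^sup>*\<^sup>* a b" by simp
  have "?S\<^sup>*\<^sup>* u a" using a(2) by (rule sympD[OF symp_rtranclp[OF symp_span_edges]])
  also have "?S\<^sup>*\<^sup>* a b" by fact
  also have "?S\<^sup>*\<^sup>* b v" by (fact b(2))
  finally show ?thesis .
qed

lemma span_edges_convex:
  assumes g: "graph V E" and conn: "connected_graph V E" and acyc: "\<not> (\<exists>c. is_cycle E c)"
    and "Th \<subseteq> V" and "u \<in> span_verts E Th" and "v \<in> span_verts E Th"
    and p: "is_path E u v xs" and i: "Suc i < length xs"
  shows "span_edges E Th (xs ! i) (xs ! Suc i)"
proof -
  have "span_edges E Th (xs ! i) (xs ! Suc i) \<or> span_edges E Th (xs ! Suc i) (xs ! i)"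
    by (rule acyclic_path_edge_in_connecting_relation[OF g acyc span_edges_imp_edge[OF g]
          span_verts_connected[OF conn assms(4-6)] p i])
  then show ?thesis using symp_span_edges[of E Th] unfolding symp_def by blast
qed

lemma span_verts_convex:
  assumes g: "graph V E" and conn: "connected_graph V E" and acyc: "\<not> (\<exists>c. is_cycle E c)"
    and "Th \<subseteq> V" and "u \<in> span_verts E Th" and "v \<in> span_verts E Th"
    and p: "is_path E u v xs"
  shows "set xs \<subseteq> span_verts E Th"
proof
  fix z assume "z \<in> set xs"
  then obtain k where k: "k < length xs" "z = xs ! k" by (metis in_set_conv_nth)
  show "z \<in> span_verts E Th"
  proof (cases k)
    case 0
    with p k assms(5) show ?thesis unfolding is_path_def by (metis hd_conv_nth)
  next
    case (Suc j)
    with k have "span_edges E Th (xs ! j) (xs ! Suc j)" by (intro span_edges_convex[OF assms]) simp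
    then have "span_edges E Th (xs ! Suc j) (xs ! j)" by (rule sympD[OF symp_span_edges])
    with Suc k show ?thesis by (simp add: span_edges_in_span_verts)
  qed
qed

lemma span_verts_mono_in_tree:
  assumes "graph V E" and "connected_graph V E" and "\<not> (\<exists>c. is_cycle E c)"
    and "Th \<subseteq> V" and "Th' \<subseteq> span_verts E Th"
  shows "span_verts E Th' \<subseteq> span_verts E Th"
proof
  fix z assume "z \<in> span_verts E Th'"
  then obtain a b xs where ab: "a \<in> Th'" "b \<in> Th'" and xs: "is_path E a b xs" "z \<in> set xs"
    unfolding span_verts_def by blast
  from ab assms(5) have "a \<in> span_verts E Th" "b \<in> span_verts E Th" by blast+
  from span_verts_convex[OF assms(1-4) this xs(1)] xs(2) show "z \<in> span_verts E Th" by blast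
qed

lemma span_edges_mono_in_tree:
  assumes "graph V E" and "connected_graph V E" and "\<not> (\<exists>c. is_cycle E c)"
    and "Th \<subseteq> V" and "Th' \<subseteq> span_verts E Th" and "span_edges E Th' s t"
  shows "span_edges E Th s t"
proof -
  obtain a b xs i where path: "a \<in> Th'" "b \<in> Th'" "is_path E a b xs" "Suc i < length xs"
      and st: "(s = xs ! i \<and> t = xs ! Suc i) \<or> (t = xs ! i \<and> s = xs ! Suc i)"
    using assms(6) unfolding span_edges_def by blast
  from path(1,2) assms(5) have "a \<in> span_verts E Th" "b \<in> span_verts E Th" by blast+
  from span_edges_convex[OF assms(1-4) this path(3,4)]
  have "span_edges E Th (xs ! i) (xs ! Suc i)" .
  with st show ?thesis using symp_span_edges[of E Th] unfolding symp_def by blast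
qed

lemma finite_tree_span:
  assumes tree: "finite_tree V E" and "Th \<subseteq> V" and "Th \<noteq> {}"
  shows "finite_tree (span_verts E Th) (span_edges E Th)"
proof -
  have g: "graph V E" and conn: "connected_graph V E" and acyc: "\<not> (\<exists>c. is_cycle E c)"
    using tree unfolding finite_tree_def by blast+
  have "graph (span_verts E Th) (span_edges E Th)"
    unfolding graph_def
  proof (intro allI impI conjI)
    fix s t assume st: "span_edges E Th s t"
    then show ts: "span_edges E Th t s" by (rule sympD[OF symp_span_edges])
    show "s \<in> span_verts E Th" by (rule span_edges_in_span_verts[OF st])
    show "t \<in> span_verts E Th" by (rule span_edges_in_span_verts[OF ts])
    show "s \<noteq> t" using st span_edges_irreflexive[OF g] by blast
  qed
  moreover have "connected_graph (span_verts E Th) (span_edges E Th)"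
    unfolding connected_graph_def
  proof (intro conjI ballI)
    show "span_verts E Th \<noteq> {}" using assms(3) subset_span_verts[of Th E] by blast
    fix u v assume uv: "u \<in> span_verts E Th" "v \<in> span_verts E Th"
    then have "u \<in> V" "v \<in> V" using span_verts_subset[OF g assms(2)] by blast+
    then obtain xs where xs: "is_path E u v xs" using conn unfolding connected_graph_def by blast
    have "\<forall>i. Suc i < length xs \<longrightarrow> span_edges E Th (xs ! i) (xs ! Suc i)"
      using span_edges_convex[OF g conn acyc assms(2) uv xs] by blast
    with xs have "is_path (span_edges E Th) u v xs" unfolding is_path_def by blast
    then show "\<exists>xs. is_path (span_edges E Th) u v xs" by blast
  qed
  moreover have "\<not> (\<exists>c. is_cycle (span_edges E Th) c)"
  proof
    assume "\<exists>c. is_cycle (span_edges E Th) c"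
    then obtain c where "is_cycle (span_edges E Th) c" by blast
    then have "is_cycle E c" by (rule is_cycle_mono) (rule span_edges_imp_edge[OF g])
    with acyc show False by blast
  qed
  moreover have "finite (span_verts E Th)"
    using tree finite_subset[OF span_verts_subset[OF g assms(2)]] unfolding finite_tree_def by blast
  ultimately show ?thesis unfolding finite_tree_def by blast
qed

subsection \<open>Automorphism orbits\<close>

lemma is_aut_comp:
  assumes f: "is_aut V E f" and g: "is_aut V E g" shows "is_aut V E (f \<circ> g)"
  unfolding is_aut_def
proof (intro conjI ballI)
  show "bij_betw (f \<circ> g) V V" using f g unfolding is_aut_def by (blast intro: bij_betw_trans)
  fix x y assume "x \<in> V" "y \<in> V"
  moreover from this have "g x \<in> V" "g y \<in> V" using g unfolding is_aut_def by (blast dest: bij_betwE)+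
  ultimately have "E x y \<longleftrightarrow> E (g x) (g y)" "E (g x) (g y) \<longleftrightarrow> E (f (g x)) (f (g y))"
    using f g unfolding is_aut_def by blast+
  then show "E x y \<longleftrightarrow> E ((f \<circ> g) x) ((f \<circ> g) y)" by simp
qed

lemma is_aut_inv_into:
  assumes "is_aut V E f" shows "is_aut V E (inv_into V f)"
  unfolding is_aut_def
proof (intro conjI ballI)
  have bij: "bij_betw f V V" using assms unfolding is_aut_def by blast
  then show inv: "bij_betw (inv_into V f) V V" by (rule bij_betw_inv_into)
  fix x y assume xy: "x \<in> V" "y \<in> V"
  then have "inv_into V f x \<in> V" "inv_into V f y \<in> V" by (simp_all add: bij_betw_apply[OF inv])
  with assms have "E (inv_into V f x) (inv_into V f y)
      \<longleftrightarrow> E (f (inv_into V f x)) (f (inv_into V f y))"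
    unfolding is_aut_def by blast
  with xy show "E x y \<longleftrightarrow> E (inv_into V f x) (inv_into V f y)"
    by (simp add: bij_betw_inv_into_right[OF bij])
qed

lemma aut_orbit_subset: "is_aut_orbit V E Th \<Longrightarrow> Th \<subseteq> V"
  unfolding is_aut_orbit_def aut_orbit_def is_aut_def bij_betw_def by auto

lemma aut_orbit_closed:
  assumes "is_aut_orbit V E Th" and "is_aut V E f" and "a \<in> Th" shows "f a \<in> Th"
proof -
  obtain x where x: "Th = aut_orbit V E x" using assms(1) unfolding is_aut_orbit_def by blast
  with assms(3) obtain h where "is_aut V E h" "a = h x" unfolding aut_orbit_def by blast
  with assms(2) have "is_aut V E (f \<circ> h)" "f a = (f \<circ> h) x" by (simp_all add: is_aut_comp)
  with x show ?thesis unfolding aut_orbit_def by blast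
qed

lemma aut_orbit_transitive:
  assumes "is_aut_orbit V E Th" and "a \<in> Th" and "b \<in> Th"
  obtains f where "is_aut V E f" "f a = b"
proof -
  obtain x where x: "x \<in> V" "Th = aut_orbit V E x" using assms(1) unfolding is_aut_orbit_def by blast
  with assms(2,3) obtain g h where g: "is_aut V E g" "a = g x" and h: "is_aut V E h" "b = h x"
    unfolding aut_orbit_def by blast
  have "inj_on g V" using g(1) unfolding is_aut_def bij_betw_def by blast
  with x(1) g(2) h(2) have "(h \<circ> inv_into V g) a = b" by simp
  with that is_aut_comp[OF h(1) is_aut_inv_into[OF g(1)]] show ?thesis by blast
qed

lemma is_path_aut_image:
  assumes "is_aut V E f" and "is_path E a b xs" and "set xs \<subseteq> V"
  shows "is_path E (f a) (f b) (map f xs)"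
proof -
  have "inj_on f V" and edges: "\<forall>x\<in>V. \<forall>y\<in>V. E x y \<longleftrightarrow> E (f x) (f y)"
    using assms(1) unfolding is_aut_def bij_betw_def by blast+
  then have "distinct (map f xs)"
    using assms(2,3) unfolding is_path_def by (simp add: distinct_map inj_on_subset)
  moreover have "successively E (map f xs)"
    using assms(2,3) edges unfolding is_path_iff_successively successively_map
    by (auto elim!: successively_mono)
  ultimately show ?thesis
    using assms(2) unfolding is_path_iff_successively by (auto simp: hd_map last_map)
qed

lemma span_verts_aut_closed:
  assumes "graph V E" and orbit: "is_aut_orbit V E Th" and f: "is_aut V E f"
    and "z \<in> span_verts E Th"
  shows "f z \<in> span_verts E Th"
proof -
  obtain a b xs where path: "a \<in> Th" "b \<in> Th" "is_path E a b xs" "z \<in> set xs"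
    using assms(4) unfolding span_verts_def by blast
  have "set xs \<subseteq> V"
    using path_vertices_in_graph[OF assms(1) path(3)] path(1) aut_orbit_subset[OF orbit] by blast
  with f path(3) have "is_path E (f a) (f b) (map f xs)" by (rule is_path_aut_image)
  moreover have "f a \<in> Th" "f b \<in> Th" using aut_orbit_closed[OF orbit f] path(1,2) by blast+
  moreover have "f z \<in> set (map f xs)" using path(4) by simp
  ultimately show ?thesis by (blast intro: span_verts_intro)
qed

lemma aut_orbit_subset_span_verts:
  assumes "graph V E" and "is_aut_orbit V E Th" and "is_aut_orbit V E Th'"
    and "x \<in> Th'" and "x \<in> span_verts E Th"
  shows "Th' \<subseteq> span_verts E Th"
proof
  fix y assume "y \<in> Th'"
  with assms(3,4) obtain f where f: "is_aut V E f" "f x = y" by (rule aut_orbit_transitive)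
  from span_verts_aut_closed[OF assms(1,2) f(1) assms(5)] f(2) show "y \<in> span_verts E Th" by simp
qed

theorem mainTheorem10:
  fixes V :: "'a set" and E :: "'a \<Rightarrow> 'a \<Rightarrow> bool" and Delta Sigma :: "'a set" and gamma :: 'a
  assumes "finite_tree V E"
    and "is_aut_orbit V E Delta" and "is_aut_orbit V E Sigma"
    and "gamma \<in> Sigma" and "gamma \<in> span_verts E Delta"
  shows "span_verts E Sigma \<subseteq> span_verts E Delta
       \<and> (\<forall>u v. span_edges E Sigma u v \<longrightarrow> span_edges E Delta u v)
       \<and> finite_tree (span_verts E Sigma) (span_edges E Sigma)"
proof -
  have tree: "graph V E" "connected_graph V E" "\<not> (\<exists>c. is_cycle E c)"
    using assms(1) unfolding finite_tree_def by blast+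
  have Delta: "Delta \<subseteq> V" by (rule aut_orbit_subset[OF assms(2)])
  have Sigma: "Sigma \<subseteq> span_verts E Delta"
    by (rule aut_orbit_subset_span_verts[OF tree(1) assms(2-5)])
  have "finite_tree (span_verts E Sigma) (span_edges E Sigma)"
    using finite_tree_span[OF assms(1) aut_orbit_subset[OF assms(3)]] assms(4) by blast
  then show ?thesis
    using span_verts_mono_in_tree[OF tree Delta Sigma] span_edges_mono_in_tree[OF tree Delta Sigma]
    by blast
qed

end
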